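(* Let $n\ge 2$ and let $S$ be an admissible peak set in $S^B_n$. Then \[ \max\{d_\ell(\sigma,\rho) : \sigma,\rho\in P^B(S;n)\}=\begin{cases}2n-1, & \text{if } \{2,n-1\}\subseteq S,\\ 2n, & \text{otherwise.}\end{cases} \]
   Context: $S^B_n$ is the set of bijections $\sigma$ of $\{-n,\dots,-1,1,\dots,n\}$ with $\sigma(-i)=-\sigma(i)$ for all $i$; a signed permutation is written in one-line notation $\sigma(1)\cdots\sigma(n)$. A signed permutation $\sigma$ has a peak at index $i\in\{2,\dots,n-1\}$ if $\sigma(i-1)<\sigma(i)>\sigma(i+1)$ (usual order on integers). $Peak(\sigma)$ is the set of indices where $\sigma$ has a peak, and for $S\subseteq[n]$, $P^B(S;n)=\{\sigma\in S^B_n : Peak(\sigma)=S\}$. $S$ is an admissible peak set if $P^B(S;n)\neq\emptyset$ (equivalently, $S\subseteq\{2,\dots,n-1\}$ and $S$ contains no two consecutive integers). The $\ell_\infty$-metric is $d_\ell(\sigma,\rho)=\max\{|\sigma(i)-\rho(i)| : i\in[n]\}$. *)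

theory Defs
  imports Main
begin

definition signed_set :: "nat \<Rightarrow> int set" where
  "signed_set n = {-int n..-1} \<union> {1..int n}"

text \<open>Signed permutations of S^B_n: bijections of {-n..-1,1..n} with sigma(-i) = -sigma(i);
  outside the ground set they are fixed (extensional convention, as for permutes).\<close>
definition signed_perms :: "nat \<Rightarrow> (int \<Rightarrow> int) set" where
  "signed_perms n = {\<sigma>. bij_betw \<sigma> (signed_set n) (signed_set n)
                         \<and> (\<forall>i\<in>signed_set n. \<sigma> (-i) = - \<sigma> i)
                         \<and> (\<forall>i. i \<notin> signed_set n \<longrightarrow> \<sigma> i = i)}"

definition Peak :: "nat \<Rightarrow> (int \<Rightarrow> int) \<Rightarrow> int set" where
  "Peak n \<sigma> = {i. 2 \<le> i \<and> i \<le> int n - 1 \<and> \<sigma> (i - 1) < \<sigma> i \<and> \<sigma> i > \<sigma> (i + 1)}"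

definition PB :: "int set \<Rightarrow> nat \<Rightarrow> (int \<Rightarrow> int) set" where
  "PB S n = {\<sigma> \<in> signed_perms n. Peak n \<sigma> = S}"

definition admissible_peak_set :: "int set \<Rightarrow> nat \<Rightarrow> bool" where
  "admissible_peak_set S n \<longleftrightarrow> PB S n \<noteq> {}"

definition d_ell :: "nat \<Rightarrow> (int \<Rightarrow> int) \<Rightarrow> (int \<Rightarrow> int) \<Rightarrow> int" where
  "d_ell n \<sigma> \<rho> = Max {\<bar>\<sigma> i - \<rho> i\<bar> | i. i \<in> {1..int n}}"

end

theory Submission
  imports Defs
begin

text \<open>
  In a signed permutation the entry \<open>-n\<close> is never a peak, and the entry \<open>n\<close> is a peak unless
  it sits at position 1 or \<open>n\<close>; both ends are excluded when 2 and \<open>n - 1\<close> are peaks, since a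
  peak there needs a neighbour larger than \<open>n\<close>. So if \<open>{2, n - 1} \<subseteq> S\<close>, two members of
  \<open>P\<^sup>B(S; n)\<close> never carry \<open>n\<close> and \<open>-n\<close> at the same position and their distance is at most
  \<open>2n - 1\<close>; the bound \<open>2n\<close> is trivial.

  The bounds are attained by signed permutations given through their one-line words. Putting
  \<open>n + 1 - j\<close> at the positions \<open>j \<in> T\<close> and \<open>j - n - 1\<close> elsewhere makes the peaks exactly the
  interior points of \<open>T\<close>, because the negative entries increase. If \<open>2 \<notin> S\<close>, the choices
  \<open>T = S\<close> and \<open>T = S \<union> {1}\<close> differ by \<open>2n\<close> at position 1; if \<open>n - 1 \<notin> S\<close>, the words
  \<open>j \<mapsto> \<plusminus>j\<close> (positive exactly on \<open>T\<close>) do the same at position \<open>n\<close>. If \<open>{2, n - 1} \<subseteq> S\<close>, the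
  word for \<open>T = S\<close> with its first two entries replaced by \<open>n - 1, n\<close> still has peak set \<open>S\<close>,
  and differs from the one for \<open>T = S\<close> by \<open>2n - 1\<close> at position 1.
\<close>

lemma mem_signed_set_iff: "i \<in> signed_set n \<longleftrightarrow> i \<noteq> 0 \<and> \<bar>i\<bar> \<le> int n"
  by (auto simp: signed_set_def)

lemma abs_mem_signed_set: "i \<in> signed_set n \<Longrightarrow> \<bar>i\<bar> \<in> {1..int n}"
  by (auto simp: signed_set_def)

definition signed_extension :: "nat \<Rightarrow> (int \<Rightarrow> int) \<Rightarrow> int \<Rightarrow> int" where
  "signed_extension n f i = (if i \<in> signed_set n then sgn i * f \<bar>i\<bar> else i)"

definition signed_word :: "nat \<Rightarrow> (int \<Rightarrow> int) \<Rightarrow> bool" where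
  "signed_word n f \<longleftrightarrow> f ` {1..int n} \<subseteq> signed_set n \<and> inj_on (\<lambda>j. \<bar>f j\<bar>) {1..int n}"

lemma signed_wordI:
  assumes "\<And>j. j \<in> {1..int n} \<Longrightarrow> \<bar>f j\<bar> = p j"
    and "p ` {1..int n} \<subseteq> {1..int n}" and "inj_on p {1..int n}"
  shows "signed_word n f"
  using assms inj_on_cong[of "{1..int n}" "\<lambda>j. \<bar>f j\<bar>" p]
  by (fastforce simp: signed_word_def mem_signed_set_iff)

lemma signed_extension_pos [simp]: "i \<in> {1..int n} \<Longrightarrow> signed_extension n f i = f i"
  by (simp add: signed_extension_def signed_set_def)

lemma signed_extension_in_signed_perms:
  assumes "signed_word n f"
  shows "signed_extension n f \<in> signed_perms n"
proof -
  let ?g = "signed_extension n f"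
  have f_range: "f \<bar>x\<bar> \<in> signed_set n" if "x \<in> signed_set n" for x
    using assms abs_mem_signed_set[OF that] by (auto simp: signed_word_def)
  have abs_g: "\<bar>?g x\<bar> = \<bar>f \<bar>x\<bar>\<bar>" if "x \<in> signed_set n" for x
    using that by (simp add: signed_extension_def abs_mult abs_sgn_eq mem_signed_set_iff)
  have maps_to: "?g ` signed_set n \<subseteq> signed_set n"
    using abs_g f_range by (fastforce simp: mem_signed_set_iff)
  have "inj_on ?g (signed_set n)"
  proof (rule inj_onI)
    fix x y assume x: "x \<in> signed_set n" and y: "y \<in> signed_set n" and eq: "?g x = ?g y"
    then have "\<bar>f \<bar>x\<bar>\<bar> = \<bar>f \<bar>y\<bar>\<bar>"
      using abs_g by metis
    then have abs_eq: "\<bar>x\<bar> = \<bar>y\<bar>"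
      using assms abs_mem_signed_set[OF x] abs_mem_signed_set[OF y]
      by (auto simp: signed_word_def dest: inj_onD)
    moreover have "f \<bar>x\<bar> \<noteq> 0"
      using f_range[OF x] by (simp add: mem_signed_set_iff)
    ultimately have "sgn x = sgn y"
      using eq x y by (simp add: signed_extension_def)
    with abs_eq show "x = y"
      by (metis sgn_mult_abs)
  qed
  then have "bij_betw ?g (signed_set n) (signed_set n)"
    using maps_to endo_inj_surj[of "signed_set n" ?g] by (simp add: bij_betw_def signed_set_def)
  moreover have "\<forall>i\<in>signed_set n. ?g (- i) = - ?g i"
    by (auto simp: signed_extension_def mem_signed_set_iff)
  ultimately show ?thesis
    by (simp add: signed_perms_def signed_extension_def)
qed

lemma Peak_signed_extension: "Peak n (signed_extension n f) = Peak n f"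
  by (auto simp: Peak_def)

lemma d_ell_signed_extension:
  "d_ell n (signed_extension n f) (signed_extension n g) = d_ell n f g"
  unfolding d_ell_def by (metis (no_types, lifting) signed_extension_pos)

lemma signed_extension_in_PB:
  assumes "signed_word n f" and "Peak n f = S"
  shows "signed_extension n f \<in> PB S n"
  using assms by (simp add: PB_def signed_extension_in_signed_perms Peak_signed_extension)

definition no_consecutive :: "int set \<Rightarrow> bool" where
  "no_consecutive T \<longleftrightarrow> (\<forall>i\<in>T. i + 1 \<notin> T)"

lemma no_consecutive_insert:
  "no_consecutive (insert i T) \<longleftrightarrow> no_consecutive T \<and> i - 1 \<notin> T \<and> i + 1 \<notin> T"
  by (auto simp: no_consecutive_def)

lemma mem_Peak_cong:
  assumes "\<And>j. \<bar>j - i\<bar> \<le> 1 \<Longrightarrow> f j = g j"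
  shows "i \<in> Peak n f \<longleftrightarrow> i \<in> Peak n g"
  using assms[of "i - 1"] assms[of i] assms[of "i + 1"] by (simp add: Peak_def)

definition high_on :: "nat \<Rightarrow> int set \<Rightarrow> int \<Rightarrow> int" where
  "high_on n T j = (if j \<in> T then int n + 1 - j else j - int n - 1)"

definition flip_off :: "int set \<Rightarrow> int \<Rightarrow> int" where
  "flip_off T j = (if j \<in> T then j else - j)"

definition high_start :: "nat \<Rightarrow> int set \<Rightarrow> int \<Rightarrow> int" where
  "high_start n S j = (if j = 1 then int n - 1 else if j = 2 then int n else high_on n S j)"

lemma signed_word_high_on: "signed_word n (high_on n T)"
  by (rule signed_wordI[where p = "\<lambda>j. int n + 1 - j"]) (auto simp: high_on_def inj_on_def)

lemma signed_word_flip_off: "signed_word n (flip_off T)"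
  by (rule signed_wordI[where p = "\<lambda>j. j"]) (auto simp: flip_off_def)

lemma signed_word_high_start: "3 \<le> n \<Longrightarrow> signed_word n (high_start n S)"
  by (rule signed_wordI[where
        p = "\<lambda>j. if j = 1 then int n - 1 else if j = 2 then int n else int n + 1 - j"])
    (auto simp: high_start_def high_on_def inj_on_def)

lemma Peak_high_on: "no_consecutive T \<Longrightarrow> Peak n (high_on n T) = T \<inter> {2..int n - 1}"
  by (auto simp: Peak_def no_consecutive_def high_on_def split: if_splits)

lemma Peak_flip_off: "no_consecutive T \<Longrightarrow> Peak n (flip_off T) = T \<inter> {2..int n - 1}"
  by (auto simp: Peak_def no_consecutive_def flip_off_def split: if_splits)

lemma Peak_high_start:
  assumes "no_consecutive S" and "S \<subseteq> {2..int n - 1}" and "2 \<in> S"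
  shows "Peak n (high_start n S) = S"
proof (intro set_eqI)
  fix i :: int
  have "3 \<notin> S"
    using assms(1,3) by (force simp: no_consecutive_def)
  consider "i \<le> 3" | "4 \<le> i" by linarith
  then show "i \<in> Peak n (high_start n S) \<longleftrightarrow> i \<in> S"
  proof cases
    case 1
    with \<open>3 \<notin> S\<close> assms(2,3) show ?thesis
      by (auto simp: Peak_def high_start_def high_on_def)
  next
    case 2
    then have "i \<in> Peak n (high_start n S) \<longleftrightarrow> i \<in> Peak n (high_on n S)"
      by (intro mem_Peak_cong) (auto simp: high_start_def)
    with assms(1,2) show ?thesis
      by (auto simp: Peak_high_on)
  qed
qed

lemma admissible_peak_set_iff:
  "admissible_peak_set S n \<longleftrightarrow> S \<subseteq> {2..int n - 1} \<and> no_consecutive S"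
proof
  assume "admissible_peak_set S n"
  then obtain \<sigma> where "Peak n \<sigma> = S"
    by (auto simp: admissible_peak_set_def PB_def)
  then show "S \<subseteq> {2..int n - 1} \<and> no_consecutive S"
    by (auto simp: Peak_def no_consecutive_def)
next
  assume "S \<subseteq> {2..int n - 1} \<and> no_consecutive S"
  then have "signed_extension n (high_on n S) \<in> PB S n"
    by (intro signed_extension_in_PB signed_word_high_on) (auto simp: Peak_high_on)
  then show "admissible_peak_set S n"
    by (auto simp: admissible_peak_set_def)
qed

lemma signed_perm_bounds:
  assumes "\<sigma> \<in> signed_perms n" and "i \<in> {1..int n}"
  shows "- int n \<le> \<sigma> i" and "\<sigma> i \<le> int n"
proof -
  have "i \<in> signed_set n"
    using assms(2) by (simp add: signed_set_def)
  then have "\<sigma> i \<in> signed_set n"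
    using assms(1) by (auto simp: signed_perms_def bij_betw_def)
  then show "- int n \<le> \<sigma> i" and "\<sigma> i \<le> int n"
    by (auto simp: mem_signed_set_iff)
qed

lemma signed_perm_inj_on: "\<sigma> \<in> signed_perms n \<Longrightarrow> inj_on \<sigma> {1..int n}"
  by (auto simp: signed_perms_def bij_betw_def signed_set_def intro: inj_on_subset)

lemma signed_perm_max_is_peak:
  assumes \<sigma>: "\<sigma> \<in> signed_perms n" and peaks: "{2, int n - 1} \<subseteq> Peak n \<sigma>"
    and i: "i \<in> {1..int n}" and max: "\<sigma> i = int n"
  shows "i \<in> Peak n \<sigma>"
proof -
  have n: "3 \<le> int n"
    using peaks by (auto simp: Peak_def)
  have "i \<noteq> 1"
    using peaks max signed_perm_bounds(2)[OF \<sigma>, of 2] n by (auto simp: Peak_def)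
  moreover have "i \<noteq> int n"
    using peaks max signed_perm_bounds(2)[OF \<sigma>, of "int n - 1"] n by (auto simp: Peak_def)
  ultimately have i': "i \<in> {2..int n - 1}"
    using i by auto
  have "\<sigma> j < \<sigma> i" if "j \<in> {i - 1, i + 1}" for j
  proof -
    have j: "j \<in> {1..int n}" "j \<noteq> i"
      using that i' by auto
    then have "\<sigma> j \<noteq> \<sigma> i"
      using i by (intro inj_on_contraD[OF signed_perm_inj_on[OF \<sigma>]])
    then show ?thesis
      using signed_perm_bounds(2)[OF \<sigma> j(1)] max by simp
  qed
  with i' show ?thesis
    by (simp add: Peak_def)
qed

lemma signed_perm_min_not_peak:
  assumes "\<sigma> \<in> signed_perms n" and "\<sigma> i = - int n"
  shows "i \<notin> Peak n \<sigma>"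
  using signed_perm_bounds(1)[OF assms(1), of "i - 1"] assms(2) by (auto simp: Peak_def)

lemma PB_not_opposite_extremes:
  assumes "\<sigma> \<in> PB S n" and "\<rho> \<in> PB S n" and "{2, int n - 1} \<subseteq> S"
    and "i \<in> {1..int n}" and "\<sigma> i = int n"
  shows "\<rho> i \<noteq> - int n"
  using assms signed_perm_max_is_peak[of \<sigma> n i] signed_perm_min_not_peak[of \<rho> n i]
  by (auto simp: PB_def)

lemma d_ell_image: "d_ell n \<sigma> \<rho> = Max ((\<lambda>i. \<bar>\<sigma> i - \<rho> i\<bar>) ` {1..int n})"
  unfolding d_ell_def by (rule arg_cong[where f = Max]) auto

lemma abs_diff_le_d_ell: "i \<in> {1..int n} \<Longrightarrow> \<bar>\<sigma> i - \<rho> i\<bar> \<le> d_ell n \<sigma> \<rho>"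
  by (simp add: d_ell_image)

lemma d_ell_nonneg: "0 < n \<Longrightarrow> 0 \<le> d_ell n \<sigma> \<rho>"
  using abs_diff_le_d_ell[of 1 n \<sigma> \<rho>] by simp

lemma d_ell_le_iff:
  "0 < n \<Longrightarrow> d_ell n \<sigma> \<rho> \<le> B \<longleftrightarrow> (\<forall>i\<in>{1..int n}. \<bar>\<sigma> i - \<rho> i\<bar> \<le> B)"
  by (simp add: d_ell_image)

lemma d_ell_signed_perms_le:
  assumes "\<sigma> \<in> signed_perms n" and "\<rho> \<in> signed_perms n" and "0 < n"
  shows "d_ell n \<sigma> \<rho> \<le> 2 * int n"
  using assms signed_perm_bounds[of \<sigma> n] signed_perm_bounds[of \<rho> n]
  by (fastforce simp: d_ell_le_iff)

lemma d_ell_PB_le: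
  assumes \<sigma>: "\<sigma> \<in> PB S n" and \<rho>: "\<rho> \<in> PB S n" and S: "{2, int n - 1} \<subseteq> S" and "0 < n"
  shows "d_ell n \<sigma> \<rho> \<le> 2 * int n - 1"
proof -
  have "\<bar>\<sigma> i - \<rho> i\<bar> \<le> 2 * int n - 1" if i: "i \<in> {1..int n}" for i
  proof -
    have "\<rho> i \<noteq> - int n" if "\<sigma> i = int n"
      using PB_not_opposite_extremes[OF \<sigma> \<rho> S i that] .
    moreover have "\<sigma> i \<noteq> - int n" if "\<rho> i = int n"
      using PB_not_opposite_extremes[OF \<rho> \<sigma> S i that] .
    moreover have "\<sigma> \<in> signed_perms n" "\<rho> \<in> signed_perms n"
      using \<sigma> \<rho> by (simp_all add: PB_def)
    ultimately show ?thesis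
      using i signed_perm_bounds[of \<sigma> n i] signed_perm_bounds[of \<rho> n i] by arith
  qed
  then show ?thesis
    using d_ell_le_iff[OF \<open>0 < n\<close>] by blast
qed

lemma ex_PB_d_ell_ge_word_diff:
  assumes "signed_word n f" and "Peak n f = S" and "signed_word n g" and "Peak n g = S"
    and "i \<in> {1..int n}"
  shows "\<exists>\<sigma>\<in>PB S n. \<exists>\<rho>\<in>PB S n. \<bar>f i - g i\<bar> \<le> d_ell n \<sigma> \<rho>"
proof (intro bexI)
  show "\<bar>f i - g i\<bar> \<le> d_ell n (signed_extension n f) (signed_extension n g)"
    using abs_diff_le_d_ell[OF assms(5)] by (simp add: d_ell_signed_extension)
qed (use assms signed_extension_in_PB in blast)+

lemma ex_PB_d_ell_ge_2n:
  assumes "admissible_peak_set S n" and "\<not> {2, int n - 1} \<subseteq> S" and "0 < n"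
  shows "\<exists>\<sigma>\<in>PB S n. \<exists>\<rho>\<in>PB S n. 2 * int n \<le> d_ell n \<sigma> \<rho>"
proof -
  have S: "S \<subseteq> {2..int n - 1}" "no_consecutive S"
    using assms(1) by (auto simp: admissible_peak_set_iff)
  consider "2 \<notin> S" | "int n - 1 \<notin> S"
    using assms(2) by auto
  then show ?thesis
  proof cases
    case 1
    then have "no_consecutive (insert 1 S)"
      using S by (auto simp: no_consecutive_insert)
    then have "\<exists>\<sigma>\<in>PB S n. \<exists>\<rho>\<in>PB S n.
        \<bar>high_on n (insert 1 S) 1 - high_on n S 1\<bar> \<le> d_ell n \<sigma> \<rho>"
      using S \<open>0 < n\<close> by (intro ex_PB_d_ell_ge_word_diff signed_word_high_on) (auto simp: Peak_high_on)
    moreover have "\<bar>high_on n (insert 1 S) 1 - high_on n S 1\<bar> = 2 * int n"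
      using S by (auto simp: high_on_def)
    ultimately show ?thesis
      by simp
  next
    case 2
    then have "no_consecutive (insert (int n) S)"
      using S by (auto simp: no_consecutive_insert)
    then have "\<exists>\<sigma>\<in>PB S n. \<exists>\<rho>\<in>PB S n.
        \<bar>flip_off (insert (int n) S) (int n) - flip_off S (int n)\<bar> \<le> d_ell n \<sigma> \<rho>"
      using S \<open>0 < n\<close> by (intro ex_PB_d_ell_ge_word_diff signed_word_flip_off) (auto simp: Peak_flip_off)
    moreover have "\<bar>flip_off (insert (int n) S) (int n) - flip_off S (int n)\<bar> = 2 * int n"
      using S by (auto simp: flip_off_def)
    ultimately show ?thesis
      by simp
  qed
qed

lemma ex_PB_d_ell_ge_2n_minus_1:
  assumes "admissible_peak_set S n" and "{2, int n - 1} \<subseteq> S"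
  shows "\<exists>\<sigma>\<in>PB S n. \<exists>\<rho>\<in>PB S n. 2 * int n - 1 \<le> d_ell n \<sigma> \<rho>"
proof -
  have S: "S \<subseteq> {2..int n - 1}" "no_consecutive S"
    using assms(1) by (auto simp: admissible_peak_set_iff)
  then have n: "3 \<le> n"
    using assms(2) by auto
  then have "\<exists>\<sigma>\<in>PB S n. \<exists>\<rho>\<in>PB S n. \<bar>high_start n S 1 - high_on n S 1\<bar> \<le> d_ell n \<sigma> \<rho>"
    using S assms(2) by (intro ex_PB_d_ell_ge_word_diff signed_word_high_start signed_word_high_on)
      (auto simp: Peak_high_start Peak_high_on)
  moreover have "\<bar>high_start n S 1 - high_on n S 1\<bar> = 2 * int n - 1"
    using S n by (auto simp: high_start_def high_on_def)
  ultimately show ?thesis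
    by simp
qed

theorem theorem4p8:
  fixes n :: nat and S :: "int set"
  assumes "n \<ge> 2" and "admissible_peak_set S n"
  shows "Max {d_ell n \<sigma> \<rho> | \<sigma> \<rho>. \<sigma> \<in> PB S n \<and> \<rho> \<in> PB S n}
         = (if {2, int n - 1} \<subseteq> S then 2 * int n - 1 else 2 * int n)"
proof -
  define D where "D = {d_ell n \<sigma> \<rho> | \<sigma> \<rho>. \<sigma> \<in> PB S n \<and> \<rho> \<in> PB S n}"
  define b where "b = (if {2, int n - 1} \<subseteq> S then 2 * int n - 1 else 2 * int n)"
  have n: "0 < n"
    using assms(1) by simp
  have "d_ell n \<sigma> \<rho> \<le> b" if "\<sigma> \<in> PB S n" and "\<rho> \<in> PB S n" for \<sigma> \<rho>
    using that d_ell_PB_le[OF that _ n] d_ell_signed_perms_le[OF _ _ n, of \<sigma> \<rho>]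
    by (simp add: PB_def b_def)
  then have upper: "d \<in> D \<Longrightarrow> d \<in> {0..b}" for d
    using d_ell_nonneg[OF n] by (auto simp: D_def)
  have "\<exists>\<sigma>\<in>PB S n. \<exists>\<rho>\<in>PB S n. b \<le> d_ell n \<sigma> \<rho>"
    using ex_PB_d_ell_ge_2n[OF assms(2) _ n] ex_PB_d_ell_ge_2n_minus_1[OF assms(2)] by (simp add: b_def)
  then have "b \<in> D"
    using upper by (force simp: D_def intro: antisym)
  moreover have "finite D"
    using upper by (blast intro: finite_subset[of D "{0..b}"])
  ultimately have "Max D = b"
    using upper by (intro Max_eqI) auto
  then show ?thesis
    by (simp add: D_def b_def)
qed

end
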